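(* Let $n\ge2$, $d\ge1$, $\tau>0$, $\sigma>0$, with $\mu^\star_1,\mu^\star_2\stackrel{\mathrm{i.i.d.}}{\sim}\mathcal N(0,\tau^2I_d)$, $\xi_1,\dots,\xi_n\stackrel{\mathrm{i.i.d.}}{\sim}\mathcal N(0,\sigma^2I_d)$ independent, fixed labels $z^\star_i\in\{1,2\}$ with both classes $S^\star_\ell=\{i:z^\star_i=\ell\}$ nonempty, $x_i=\mu^\star_{z^\star_i}+\xi_i$, and a fixed partition $\{C_1,C_2\}$ of $[n]$ into nonempty sets. Let $i\in S^\star_\ell$ and let $C_{\overline j}$ be the cluster with $i\notin C_{\overline j}$. Then $$\Delta_H^2(x_i,C_{\overline j})=\frac{\|x_i-\widehat\mu_{\overline j}\|^2}{1+1/|C_{\overline j}|}\sim\eta\,\chi^2_d,\qquad \eta=2\tau^2\frac{|C_{\overline j}|}{|C_{\overline j}|+1}(1-R^\ell_{\overline j})^2+\sigma^2.$$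
   Context: $R^\ell_k=|C_k\cap S^\star_\ell|/|C_k|$; $\widehat\mu_k=|C_k|^{-1}\sum_{m\in C_k}x_m$. $\Delta_H^2$ is the Hartigan weighted distance, which for $i\notin C_k$ equals $\frac{|C_k|}{|C_k|+1}\|x_i-\widehat\mu_k\|^2$. "$Y\sim a\chi^2_d$" means $Y/a$ is chi-squared with $d$ degrees of freedom. Randomness is over the centers and noise. *)

theory Defs
  imports "HOL-Probability.Probability"
begin

text \<open>Index of the elementary real Gaussian coordinates:
  Ctr l k = k-th coordinate of the center mu*_l (l in {1,2}),
  Noise i k = k-th coordinate of the noise xi_i (i < n).\<close>
datatype src = Ctr nat nat | Noise nat nat

definition chi_squared_density :: "nat \<Rightarrow> real \<Rightarrow> real" where
  "chi_squared_density k x =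
     (if x > 0 then x powr (real k / 2 - 1) * exp (- x / 2)
                    / (2 powr (real k / 2) * Gamma (real k / 2))
      else 0)"

end

theory Submission
  imports Defs
begin

text \<open>Coordinatewise, \<open>x\<^sub>i - \<mu>hat\<close> is a linear form in the independent centred Gaussians
  \<open>\<mu>\<^sup>\<star>\<^sub>l\<close> and \<open>\<xi>\<^sub>m\<close>: the two centres enter with coefficients \<open>\<plusminus>(1 - R)\<close>, the noise \<open>\<xi>\<^sub>i\<close> with
  coefficient 1 and each \<open>\<xi>\<^sub>m\<close>, \<open>m \<in> C\<close>, with \<open>-1/|C|\<close>. Hence it is centred normal with variance
  \<open>2\<tau>\<^sup>2(1 - R)\<^sup>2 + \<sigma>\<^sup>2(1 + 1/|C|) = (1 + 1/|C|)\<eta>\<close>. Distinct coordinates are built from disjoint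
  sets of independent variables, so the \<open>d\<close> standardised squares are independent \<open>\<chi>\<^sup>2\<^sub>1\<close> variables,
  and a sum of independent chi-squared variables is chi-squared because the convolution of
  two chi-squared densities reduces to a Beta integral.\<close>

section \<open>Chi-squared distributions\<close>

lemma borel_measurable_chi_squared_density [measurable]:
  "chi_squared_density k \<in> borel_measurable borel"
  unfolding chi_squared_density_def by measurable

lemma chi_squared_density_nonneg: "0 \<le> chi_squared_density k x"
proof (cases "k = 0")
  case False
  then have "Gamma (real k / 2) > 0" by (intro Gamma_real_pos) simp
  then show ?thesis by (simp add: chi_squared_density_def)
qed (simp add: chi_squared_density_def)

lemma chi_squared_density_1_square:
  assumes "x > 0"
  shows "chi_squared_density 1 (x\<^sup>2) * (2 * x) = 2 * std_normal_density x"
proof -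
  have "(x\<^sup>2) powr (- (1 / 2)) = 1 / x"
    using assms by (simp add: powr_minus powr_half_sqrt inverse_eq_divide)
  then show ?thesis
    using assms unfolding chi_squared_density_def std_normal_density_def
    by (simp add: powr_half_sqrt Gamma_one_half_real real_sqrt_mult field_simps)
qed

lemma nn_integral_chi_squared_1_atMost_square:
  fixes b :: real
  assumes "0 \<le> b"
  shows "(\<integral>\<^sup>+x. ennreal (chi_squared_density 1 x) * indicator {..b\<^sup>2} x \<partial>lborel)
       = 2 * (\<integral>\<^sup>+x. ennreal (std_normal_density x) * indicator {0..b} x \<partial>lborel)"
proof -
  have "(\<integral>\<^sup>+x. ennreal (chi_squared_density 1 x) * indicator {..b\<^sup>2} x \<partial>lborel)
      = (\<integral>\<^sup>+x. ennreal (chi_squared_density 1 x * indicator {0\<^sup>2..b\<^sup>2} x) \<partial>lborel)"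
    by (intro nn_integral_cong) (auto simp: chi_squared_density_def indicator_def)
  also have "\<dots> = (\<integral>\<^sup>+x. ennreal (chi_squared_density 1 (x\<^sup>2) * (2 * x) * indicator {0..b} x) \<partial>lborel)"
    by (rule nn_integral_substitution[where g="\<lambda>x. x\<^sup>2" and g'="\<lambda>x. 2 * x"])
       (use assms in \<open>auto intro!: derivative_eq_intros continuous_intros
                      simp: set_borel_measurable_def\<close>)
  also have "\<dots> = (\<integral>\<^sup>+x. 2 * (ennreal (std_normal_density x) * indicator {0..b} x) \<partial>lborel)"
  proof (intro nn_integral_cong_AE, rule AE_mp[OF AE_lborel_singleton[of 0]], intro AE_I2 impI)
    fix x :: real
    assume "x \<noteq> 0"
    show "ennreal (chi_squared_density 1 (x\<^sup>2) * (2 * x) * indicator {0..b} x)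
        = 2 * (ennreal (std_normal_density x) * indicator {0..b} x)"
    proof (cases "x \<in> {0..b}")
      case True
      with \<open>x \<noteq> 0\<close> have jacobian: "chi_squared_density 1 (x\<^sup>2) * (2 * x) = 2 * std_normal_density x"
        by (intro chi_squared_density_1_square) auto
      show ?thesis
        using True by (simp only: jacobian indicator_simps(1) mult_1_right) (simp add: ennreal_mult)
    qed simp
  qed
  also have "\<dots> = 2 * (\<integral>\<^sup>+x. ennreal (std_normal_density x) * indicator {0..b} x \<partial>lborel)"
    by (rule nn_integral_cmult) measurable
  finally show ?thesis .
qed

lemma nn_integral_std_normal_symmetric:
  fixes b :: real
  shows "(\<integral>\<^sup>+x. ennreal (std_normal_density x) * indicator {-b..b} x \<partial>lborel)
       = 2 * (\<integral>\<^sup>+x. ennreal (std_normal_density x) * indicator {0..b} x \<partial>lborel)"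
proof -
  let ?I = "\<integral>\<^sup>+x. ennreal (std_normal_density x) * indicator {0..b} x \<partial>lborel"
  have "(\<integral>\<^sup>+x. ennreal (std_normal_density x) * indicator {-b..b} x \<partial>lborel)
      = (\<integral>\<^sup>+x. ennreal (std_normal_density x) * indicator {0..b} x
               + ennreal (std_normal_density x) * indicator {0..b} (-x) \<partial>lborel)"
    by (intro nn_integral_cong_AE, rule AE_mp[OF AE_lborel_singleton[of 0]])
       (auto simp: indicator_def)
  also have "\<dots> = ?I + (\<integral>\<^sup>+x. ennreal (std_normal_density x) * indicator {0..b} (-x) \<partial>lborel)"
    by (rule nn_integral_add) measurable
  also have "(\<integral>\<^sup>+x. ennreal (std_normal_density x) * indicator {0..b} (-x) \<partial>lborel)
      = ennreal \<bar>-1\<bar> * (\<integral>\<^sup>+x. ennreal (std_normal_density (0 + -1 * x))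
                              * indicator {0..b} (-(0 + -1 * x)) \<partial>lborel)"
    by (rule nn_integral_real_affine) measurable
  also have "\<dots> = ?I"
    by (simp add: normal_density_def)
  finally show ?thesis
    by (simp add: mult_2)
qed

lemma (in prob_space) distributed_square_std_normal:
  assumes W: "distributed M lborel W std_normal_density"
  shows "distributed M lborel (\<lambda>\<omega>. (W \<omega>)\<^sup>2) (chi_squared_density 1)"
proof -
  have [measurable]: "W \<in> borel_measurable M"
    using distributed_measurable[OF W] by simp
  have cdf: "(\<integral>\<^sup>+x. ennreal (chi_squared_density 1 x) * indicator {..a} x \<partial>lborel)
      = emeasure M {\<omega> \<in> space M. (W \<omega>)\<^sup>2 \<le> a}" for a :: real
  proof (cases "a < 0")
    case True
    then have empty: "{\<omega> \<in> space M. (W \<omega>)\<^sup>2 \<le> a} = {}"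
      by (auto simp: not_le intro: less_le_trans[OF _ zero_le_power2])
    have "(\<lambda>x. ennreal (chi_squared_density 1 x) * indicator {..a} x) = (\<lambda>x. 0)"
      using True by (auto simp: fun_eq_iff chi_squared_density_def indicator_def)
    then show ?thesis
      unfolding empty by simp
  next
    case False
    define b where "b = sqrt a"
    have b: "0 \<le> b" "a = b\<^sup>2" using False by (auto simp: b_def)
    have "{\<omega> \<in> space M. (W \<omega>)\<^sup>2 \<le> a} = W -` {-b..b} \<inter> space M"
      using b by (auto simp: abs_le_square_iff[symmetric] abs_le_iff)
    then show ?thesis
      using distributed_emeasure[OF W, of "{-b..b}"] b
        nn_integral_chi_squared_1_atMost_square nn_integral_std_normal_symmetric
      by simp
  qed
  show ?thesis
    by (rule distributedI_borel_atMost[where g="\<lambda>a. measure M {\<omega> \<in> space M. (W \<omega>)\<^sup>2 \<le> a}"])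
       (use cdf in \<open>auto simp: ennreal_indicator ennreal_mult' chi_squared_density_nonneg
                                emeasure_eq_measure\<close>)
qed

lemma nn_integral_Beta_scaled:
  fixes x p q :: real
  assumes x: "0 < x" and "0 < p" "0 < q"
  shows "(\<integral>\<^sup>+y. ennreal (y powr (q - 1) * (x - y) powr (p - 1)) * indicator {0<..<x} y \<partial>lborel)
       = ennreal (x powr (p + q - 1) * Beta q p)"
proof -
  define f where "f y = ennreal (y powr (q - 1) * (x - y) powr (p - 1)) * indicator {0<..<x} y" for y
  define B where "B s = s powr (q - 1) * (1 - s) powr (p - 1)" for s :: real
  have [measurable]: "f \<in> borel_measurable borel"
    unfolding f_def by measurable
  have "(\<integral>\<^sup>+y. f y \<partial>lborel) = ennreal \<bar>x\<bar> * (\<integral>\<^sup>+s. f (0 + x * s) \<partial>lborel)"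
    using x by (intro nn_integral_real_affine) auto
  also have "(\<integral>\<^sup>+s. f (0 + x * s) \<partial>lborel)
      = (\<integral>\<^sup>+s. ennreal (x powr (p + q - 2)) * (ennreal (B s) * indicator {0..1} s) \<partial>lborel)"
  proof (intro nn_integral_cong)
    fix s :: real
    show "f (0 + x * s) = ennreal (x powr (p + q - 2)) * (ennreal (B s) * indicator {0..1} s)"
    proof (cases "0 < s \<and> s < 1")
      case True
      have "x - x * s = x * (1 - s)" by (simp add: algebra_simps)
      then have "(x * s) powr (q - 1) * (x - x * s) powr (p - 1) = x powr (p + q - 2) * B s"
        using True x by (simp add: B_def powr_mult powr_add[symmetric] mult_ac add_diff_eq)
      then show ?thesis
        using True x by (simp add: f_def B_def ennreal_mult' mult_less_cancel_left1)
    next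
      case False
      \<comment> \<open>at \<open>s = 0\<close> and \<open>s = 1\<close> the integrand vanishes only because \<open>0 powr a = 0\<close>\<close>
      then have "x * s \<notin> {0<..<x}"
        using x by (auto simp: zero_less_mult_iff mult_less_cancel_left1)
      moreover have "B s * indicator {0..1} s = 0"
        using False by (auto simp: B_def indicator_def)
      ultimately show ?thesis
        by (cases "s \<in> {0..1}") (auto simp: f_def)
    qed
  qed
  also have "\<dots> = ennreal (x powr (p + q - 2)) * (\<integral>\<^sup>+s. ennreal (B s) * indicator {0..1} s \<partial>lborel)"
    by (rule nn_integral_cmult) (simp add: B_def)
  also have "(\<integral>\<^sup>+s. ennreal (B s) * indicator {0..1} s \<partial>lborel) = ennreal (Beta q p)"
    unfolding B_def
    by (rule nn_integral_has_integral_lebesgue'[OF _ has_integral_Beta_real]) (use assms in auto)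
  also have "ennreal \<bar>x\<bar> * (ennreal (x powr (p + q - 2)) * ennreal (Beta q p))
      = ennreal (x powr (p + q - 1) * Beta q p)"
    using assms by (simp add: ennreal_mult'[symmetric] mult.assoc[symmetric] powr_mult_base Beta_def)
  finally show ?thesis
    by (simp add: f_def)
qed

lemma chi_squared_density_convolution:
  assumes "1 \<le> a" "1 \<le> b"
  shows "(\<integral>\<^sup>+y. ennreal (chi_squared_density a (x - y)) * ennreal (chi_squared_density b y) \<partial>lborel)
       = ennreal (chi_squared_density (a + b) x)"
proof (cases "0 < x")
  case False
  then have "(\<lambda>y. ennreal (chi_squared_density a (x - y)) * ennreal (chi_squared_density b y)) = (\<lambda>y. 0)"
    by (auto simp: fun_eq_iff chi_squared_density_def)
  then show ?thesis
    using False by (simp add: chi_squared_density_def)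
next
  case True
  define p where "p = real a / 2"
  define q where "q = real b / 2"
  have p: "0 < p" and q: "0 < q"
    using assms by (auto simp: p_def q_def)
  define K where "K = exp (- x / 2) / (2 powr p * Gamma p * (2 powr q * Gamma q))"
  have "(\<integral>\<^sup>+y. ennreal (chi_squared_density a (x - y)) * ennreal (chi_squared_density b y) \<partial>lborel)
      = (\<integral>\<^sup>+y. ennreal K * (ennreal (y powr (q - 1) * (x - y) powr (p - 1)) * indicator {0<..<x} y) \<partial>lborel)"
  proof (intro nn_integral_cong)
    fix y :: real
    show "ennreal (chi_squared_density a (x - y)) * ennreal (chi_squared_density b y)
        = ennreal K * (ennreal (y powr (q - 1) * (x - y) powr (p - 1)) * indicator {0<..<x} y)"
    proof (cases "0 < y \<and> y < x")
      case True
      then have "chi_squared_density a (x - y) * chi_squared_density b y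
          = K * (y powr (q - 1) * (x - y) powr (p - 1))"
        using p q
        by (simp add: chi_squared_density_def p_def[symmetric] q_def[symmetric] K_def mult_exp_exp
                      field_simps)
      moreover have "0 \<le> K" "0 \<le> y powr (q - 1) * (x - y) powr (p - 1)"
        using p q by (auto simp: K_def)
      ultimately show ?thesis
        using True by (simp add: ennreal_mult'[symmetric] chi_squared_density_nonneg)
    qed (auto simp: chi_squared_density_def)
  qed
  also have "\<dots> = ennreal K * ennreal (x powr (p + q - 1) * Beta q p)"
    using True p q by (simp add: nn_integral_cmult nn_integral_Beta_scaled)
  also have "\<dots> = ennreal (chi_squared_density (a + b) x)"
  proof -
    have degrees: "real (a + b) / 2 = p + q"
      by (simp add: p_def q_def add_divide_distrib)
    have "chi_squared_density (a + b) x
        = x powr (p + q - 1) * exp (- x / 2) / (2 powr (p + q) * Gamma (p + q))"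
      using True unfolding chi_squared_density_def degrees by simp
    moreover have "Gamma p \<noteq> 0" "Gamma q \<noteq> 0" "Gamma (p + q) \<noteq> 0"
      using Gamma_real_pos[OF p] Gamma_real_pos[OF q] Gamma_real_pos[OF add_pos_pos[OF p q]]
      by linarith+
    ultimately have "K * (x powr (p + q - 1) * Beta q p) = chi_squared_density (a + b) x"
      by (simp add: K_def Beta_def powr_add field_simps)
    moreover have "0 \<le> K" "0 \<le> x powr (p + q - 1) * Beta q p"
      using p q by (auto simp: K_def Beta_def)
    ultimately show ?thesis
      by (simp add: ennreal_mult'[symmetric])
  qed
  finally show ?thesis .
qed

lemma (in prob_space) distributed_sum_chi_squared:
  assumes "finite I" "I \<noteq> {}" "indep_vars (\<lambda>_. borel) Q I"
    and "\<And>i. i \<in> I \<Longrightarrow> 1 \<le> k i"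
    and "\<And>i. i \<in> I \<Longrightarrow> distributed M lborel (Q i) (chi_squared_density (k i))"
  shows "distributed M lborel (\<lambda>\<omega>. \<Sum>i\<in>I. Q i \<omega>) (chi_squared_density (\<Sum>i\<in>I. k i))"
  using assms
proof (induction I rule: finite_ne_induct)
  case (insert i I)
  have "indep_var borel (Q i) borel (\<lambda>\<omega>. \<Sum>j\<in>I. Q j \<omega>)"
    using insert by (intro indep_vars_sum) auto
  moreover have "distributed M lborel (\<lambda>\<omega>. \<Sum>j\<in>I. Q j \<omega>) (chi_squared_density (\<Sum>j\<in>I. k j))"
    using insert by (intro insert.IH) (auto intro: indep_vars_subset)
  ultimately have "distributed M lborel (\<lambda>\<omega>. Q i \<omega> + (\<Sum>j\<in>I. Q j \<omega>))
      (\<lambda>x. \<integral>\<^sup>+y. ennreal (chi_squared_density (k i) (x - y))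
                  * ennreal (chi_squared_density (\<Sum>j\<in>I. k j) y) \<partial>lborel)"
    using insert.prems by (intro distributed_convolution) auto
  moreover obtain j where "j \<in> I"
    using insert.hyps(2) by blast
  then have "1 \<le> (\<Sum>j\<in>I. k j)"
    using insert by (intro order_trans[OF _ member_le_sum]) auto
  ultimately show ?case
    using insert by (simp add: chi_squared_density_convolution)
qed simp

section \<open>Sums of squares of Gaussian linear forms\<close>

lemma (in prob_space) distributed_sum_squares_standardized_normal:
  assumes "finite K" "K \<noteq> {}" "indep_vars (\<lambda>_. borel) Y K"
    and "\<And>k. k \<in> K \<Longrightarrow> 0 < s k"
    and "\<And>k. k \<in> K \<Longrightarrow> distributed M lborel (Y k) (normal_density (\<mu> k) (s k))"
  shows "distributed M lborel (\<lambda>\<omega>. \<Sum>k\<in>K. ((Y k \<omega> - \<mu> k) / s k)\<^sup>2)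
           (chi_squared_density (card K))"
proof -
  have "indep_vars (\<lambda>_. borel) (\<lambda>k \<omega>. ((Y k \<omega> - \<mu> k) / s k)\<^sup>2) K"
    using indep_vars_compose2[OF assms(3), of "\<lambda>k y. ((y - \<mu> k) / s k)\<^sup>2"] by simp
  moreover have "distributed M lborel (\<lambda>\<omega>. ((Y k \<omega> - \<mu> k) / s k)\<^sup>2) (chi_squared_density 1)"
    if "k \<in> K" for k
    using that assms(4,5) normal_standard_normal_convert
    by (intro distributed_square_std_normal) blast
  ultimately show ?thesis
    using distributed_sum_chi_squared[of K _ "\<lambda>_. 1"] assms(1,2) by simp
qed

lemma (in prob_space) distributed_normal_linear_combination:
  assumes "finite J" "indep_vars (\<lambda>_. borel) X J"
    and "\<And>j. j \<in> J \<Longrightarrow> 0 < s j"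
    and "\<And>j. j \<in> J \<Longrightarrow> distributed M lborel (X j) (normal_density (\<mu> j) (s j))"
    and "0 < (\<Sum>j\<in>J. (c j * s j)\<^sup>2)"
  shows "distributed M lborel (\<lambda>\<omega>. \<Sum>j\<in>J. c j * X j \<omega>)
           (normal_density (\<Sum>j\<in>J. c j * \<mu> j) (sqrt (\<Sum>j\<in>J. (c j * s j)\<^sup>2)))"
proof -
  define J' where "J' = {j \<in> J. c j \<noteq> 0}"
  have J': "finite J'" "J' \<subseteq> J"
    using assms(1) by (auto simp: J'_def)
  have drop_zeros: "(\<Sum>j\<in>J. f j) = (\<Sum>j\<in>J'. f j)" if "\<And>j. c j = 0 \<Longrightarrow> f j = 0"
    for f :: "_ \<Rightarrow> real"
    using assms(1) that by (intro sum.mono_neutral_right) (auto simp: J'_def)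
  have variance: "(\<Sum>j\<in>J. (c j * s j)\<^sup>2) = (\<Sum>j\<in>J'. (\<bar>c j\<bar> * s j)\<^sup>2)"
    by (subst drop_zeros) (auto simp: power_mult_distrib)
  then have "J' \<noteq> {}"
    using assms(5) by auto
  moreover have "indep_vars (\<lambda>_. borel) (\<lambda>j \<omega>. c j * X j \<omega>) J'"
    using indep_vars_compose2[OF indep_vars_subset[OF assms(2) J'(2)], of "\<lambda>j x. c j * x"] by simp
  moreover have "distributed M lborel (\<lambda>\<omega>. c j * X j \<omega>) (normal_density (c j * \<mu> j) (\<bar>c j\<bar> * s j))"
    if "j \<in> J'" for j
    using normal_density_affine[of "X j" "\<mu> j" "s j" "c j" 0] that assms(3,4) J'(2)
    by (auto simp: J'_def)
  ultimately have "distributed M lborel (\<lambda>\<omega>. \<Sum>j\<in>J'. c j * X j \<omega>)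
      (normal_density (\<Sum>j\<in>J'. c j * \<mu> j) (sqrt (\<Sum>j\<in>J'. (\<bar>c j\<bar> * s j)\<^sup>2)))"
    using assms(3) J' by (intro sum_indep_normal) (auto simp: J'_def)
  then show ?thesis
    unfolding variance by (subst (1 2) drop_zeros) auto
qed

lemma (in prob_space) indep_vars_block_linear_forms:
  fixes X :: "'i \<Rightarrow> 'a \<Rightarrow> real"
  assumes "indep_vars (\<lambda>_. borel) X I" "\<And>k. k \<in> K \<Longrightarrow> S k \<subseteq> I" "disjoint_family_on S K"
  shows "indep_vars (\<lambda>_. borel) (\<lambda>k \<omega>. \<Sum>s\<in>S k. c s * X s \<omega>) K"
proof -
  have "indep_vars (\<lambda>_. borel) (\<lambda>k \<omega>. \<Sum>s\<in>S k. c s * restrict (\<lambda>s. X s \<omega>) (S k) s) K"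
    by (rule indep_vars_compose2[OF indep_vars_restrict[OF assms], where Y="\<lambda>k f. \<Sum>s\<in>S k. c s * f s"])
       measurable
  then show ?thesis
    by simp
qed

lemma (in prob_space) distributed_sum_squares_block_linear_forms:
  assumes "indep_vars (\<lambda>_. borel) X I" "finite K" "K \<noteq> {}"
    and "\<And>k. k \<in> K \<Longrightarrow> S k \<subseteq> I" "\<And>k. k \<in> K \<Longrightarrow> finite (S k)" "disjoint_family_on S K"
    and "\<And>s. s \<in> I \<Longrightarrow> 0 < sd s"
    and "\<And>s. s \<in> I \<Longrightarrow> distributed M lborel (X s) (normal_density 0 (sd s))"
    and "0 < v" "\<And>k. k \<in> K \<Longrightarrow> (\<Sum>s\<in>S k. (c s * sd s)\<^sup>2) = v"
  shows "distributed M lborel (\<lambda>\<omega>. \<Sum>k\<in>K. (\<Sum>s\<in>S k. c s * X s \<omega>)\<^sup>2 / v)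
           (chi_squared_density (card K))"
proof -
  have "distributed M lborel (\<lambda>\<omega>. \<Sum>s\<in>S k. c s * X s \<omega>) (normal_density 0 (sqrt v))"
    if "k \<in> K" for k
  proof -
    have "distributed M lborel (\<lambda>\<omega>. \<Sum>s\<in>S k. c s * X s \<omega>)
        (normal_density (\<Sum>s\<in>S k. c s * 0) (sqrt (\<Sum>s\<in>S k. (c s * sd s)\<^sup>2)))"
      using that assms(4,5,7,8,9,10)
      by (intro distributed_normal_linear_combination indep_vars_subset[OF assms(1)]) blast+
    then show ?thesis
      using that assms(10) by simp
  qed
  then have "distributed M lborel (\<lambda>\<omega>. \<Sum>k\<in>K. (((\<Sum>s\<in>S k. c s * X s \<omega>) - 0) / sqrt v)\<^sup>2)
      (chi_squared_density (card K))"
    using assms by (intro distributed_sum_squares_standardized_normal indep_vars_block_linear_forms) auto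
  then show ?thesis
    using assms(9) by (simp add: power_divide)
qed

section \<open>The two-cluster Gaussian mixture\<close>

definition coord_sources :: "nat set \<Rightarrow> nat set \<Rightarrow> nat \<Rightarrow> src set" where
  "coord_sources L N k = (\<lambda>l. Ctr l k) ` L \<union> (\<lambda>m. Noise m k) ` N"

text \<open>The coefficient of source \<open>s\<close> in \<open>x\<^sub>i - \<mu>hat\<^sub>C\<close>: its weight in \<open>x\<^sub>i\<close> minus its average weight
  over the points of \<open>C\<close>.\<close>
definition residual_coeff :: "(nat \<Rightarrow> nat) \<Rightarrow> nat \<Rightarrow> nat set \<Rightarrow> src \<Rightarrow> real" where
  "residual_coeff z i C s = (case s of
      Ctr l _ \<Rightarrow> of_bool (l = z i) - real (card {m \<in> C. z m = l}) / real (card C)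
    | Noise m _ \<Rightarrow> of_bool (m = i) - of_bool (m \<in> C) / real (card C))"

lemma sum_coord_sources:
  assumes "finite L" "finite N"
  shows "(\<Sum>s\<in>coord_sources L N k. g s) = (\<Sum>l\<in>L. g (Ctr l k)) + (\<Sum>m\<in>N. g (Noise m k))"
  unfolding coord_sources_def using assms
  by (subst sum.union_disjoint) (auto simp: sum.reindex inj_on_def)

lemma centroid_residual_eq_linear_form:
  fixes w :: "src \<Rightarrow> real"
  assumes "finite L" "finite C" "z i \<in> L" "z ` C \<subseteq> L"
  shows "w (Ctr (z i) k) + w (Noise i k) - (\<Sum>m\<in>C. w (Ctr (z m) k) + w (Noise m k)) / real (card C)
       = (\<Sum>s\<in>coord_sources L (insert i C) k. residual_coeff z i C s * w s)"
proof -
  have "(\<Sum>m\<in>C. w (Ctr (z m) k)) = (\<Sum>l\<in>L. real (card {m \<in> C. z m = l}) * w (Ctr l k))"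
    using sum.group[OF assms(2,1,4), of "\<lambda>m. w (Ctr (z m) k)"] by simp
  moreover have "(\<Sum>l\<in>L. of_bool (l = z i) * w (Ctr l k)) = w (Ctr (z i) k)"
    using assms(1,3) by simp
  ultimately have centers: "(\<Sum>l\<in>L. residual_coeff z i C (Ctr l k) * w (Ctr l k))
      = w (Ctr (z i) k) - (\<Sum>m\<in>C. w (Ctr (z m) k)) / real (card C)"
    by (simp add: residual_coeff_def left_diff_distrib sum_subtractf sum_divide_distrib)
  have "(\<Sum>m\<in>insert i C. of_bool (m \<in> C) * w (Noise m k)) = (\<Sum>m\<in>C. w (Noise m k))"
    using assms(2) by (intro sum.mono_neutral_cong_right) auto
  moreover have "(\<Sum>m\<in>insert i C. of_bool (m = i) * w (Noise m k)) = w (Noise i k)"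
    using assms(2) by simp
  ultimately have noises: "(\<Sum>m\<in>insert i C. residual_coeff z i C (Noise m k) * w (Noise m k))
      = w (Noise i k) - (\<Sum>m\<in>C. w (Noise m k)) / real (card C)"
    by (simp add: residual_coeff_def left_diff_distrib sum_subtractf sum_divide_distrib[symmetric])
  show ?thesis
    using assms(1,2)
    by (simp add: sum_coord_sources centers noises sum.distrib add_divide_distrib)
qed

lemma residual_coeff_variance:
  fixes \<tau> \<sigma> :: real
  assumes "finite C" "C \<noteq> {}" "i \<notin> C" "z ` C \<subseteq> {z i, l'}" "l' \<noteq> z i"
  shows "(\<Sum>s\<in>coord_sources {z i, l'} (insert i C) k.
            (residual_coeff z i C s * (case s of Ctr _ _ \<Rightarrow> \<tau> | Noise _ _ \<Rightarrow> \<sigma>))\<^sup>2)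
       = 2 * \<tau>\<^sup>2 * (1 - real (card {m \<in> C. z m = z i}) / real (card C))\<^sup>2
         + \<sigma>\<^sup>2 * (1 + 1 / real (card C))"
proof -
  define c where "c = real (card C)"
  define R where "R = real (card {m \<in> C. z m = z i}) / c"
  have c: "0 < c"
    using assms(1,2) by (simp add: c_def card_gt_0_iff)
  have "C = {m \<in> C. z m = z i} \<union> {m \<in> C. z m = l'}"
    using assms(4) by auto
  then have "card {m \<in> C. z m = z i} + card {m \<in> C. z m = l'} = card C"
    using assms(1,5) by (subst (3) \<open>C = _\<close>, subst card_Un_disjoint) auto
  then have other: "real (card {m \<in> C. z m = l'}) / c = 1 - R"
    using c by (simp add: R_def c_def field_simps flip: of_nat_add)
  have "residual_coeff z i C (Ctr (z i) k) = 1 - R" "residual_coeff z i C (Ctr l' k) = - (1 - R)"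
    using assms(5) other by (simp_all add: residual_coeff_def R_def c_def)
  then have centers: "(\<Sum>l\<in>{z i, l'}. (residual_coeff z i C (Ctr l k) * \<tau>)\<^sup>2) = 2 * \<tau>\<^sup>2 * (1 - R)\<^sup>2"
    using assms(5) by (simp add: power_mult_distrib power2_commute)
  have "residual_coeff z i C (Noise i k) = 1" "\<And>m. m \<in> C \<Longrightarrow> residual_coeff z i C (Noise m k) = - (1 / c)"
    using assms(3) by (auto simp: residual_coeff_def c_def)
  then have "(\<Sum>m\<in>insert i C. (residual_coeff z i C (Noise m k) * \<sigma>)\<^sup>2) = \<sigma>\<^sup>2 + c * (\<sigma> / c)\<^sup>2"
    using assms(1,3) by (simp add: c_def power_mult_distrib power_divide)
  also have "\<dots> = \<sigma>\<^sup>2 * (1 + 1 / c)"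
    using c by (simp add: power2_eq_square field_simps)
  finally have noises: "(\<Sum>m\<in>insert i C. (residual_coeff z i C (Noise m k) * \<sigma>)\<^sup>2) = \<sigma>\<^sup>2 * (1 + 1 / c)" .
  show ?thesis
    using assms(1) centers noises by (simp add: sum_coord_sources R_def c_def)
qed

lemma hartigan_weight_cancel:
  fixes c \<tau> \<sigma> r :: real
  assumes "0 < c"
  shows "(1 + 1 / c) * (2 * \<tau>\<^sup>2 * (c / (c + 1)) * r + \<sigma>\<^sup>2) = 2 * \<tau>\<^sup>2 * r + \<sigma>\<^sup>2 * (1 + 1 / c)"
proof -
  have "1 + 1 / c = (c + 1) / c"
    using assms by (simp add: field_simps)
  then have unit: "(1 + 1 / c) * (c / (c + 1)) = 1"
    using assms by simp
  have "(1 + 1 / c) * (2 * \<tau>\<^sup>2 * (c / (c + 1)) * r + \<sigma>\<^sup>2)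
      = ((1 + 1 / c) * (c / (c + 1))) * (2 * \<tau>\<^sup>2 * r) + \<sigma>\<^sup>2 * (1 + 1 / c)"
    by (simp only: distrib_left mult_ac)
  then show ?thesis
    by (simp only: unit mult_1)
qed

theorem corollaryD1:
  fixes M :: "'a measure" and X :: "src \<Rightarrow> 'a \<Rightarrow> real"
    and n d :: nat and \<tau> \<sigma> :: real and z :: "nat \<Rightarrow> nat"
    and C C' :: "nat set" and i :: nat
  assumes "prob_space M"
    and "n \<ge> 2" and "d \<ge> 1" and "\<tau> > 0" and "\<sigma> > 0"
    and indep: "prob_space.indep_vars M (\<lambda>_. borel) X
           ({Ctr l k | l k. l \<in> {1,2} \<and> k < d} \<union> {Noise m k | m k. m < n \<and> k < d})"
    and ctr: "\<And>l k. l \<in> {1,2} \<Longrightarrow> k < d \<Longrightarrow>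
                distributed M lborel (X (Ctr l k)) (normal_density 0 \<tau>)"
    and noise: "\<And>m k. m < n \<Longrightarrow> k < d \<Longrightarrow>
                distributed M lborel (X (Noise m k)) (normal_density 0 \<sigma>)"
    and labels: "\<And>m. m < n \<Longrightarrow> z m \<in> {1,2}"
    and classes: "\<And>l. l \<in> {1,2} \<Longrightarrow> {m. m < n \<and> z m = l} \<noteq> {}"
    and part: "C \<union> C' = {..<n}" "C \<inter> C' = {}" "C \<noteq> {}" "C' \<noteq> {}"
    and i: "i < n" "i \<notin> C"
  shows
    "let x = (\<lambda>m k \<omega>. X (Ctr (z m) k) \<omega> + X (Noise m k) \<omega>);
         muhat = (\<lambda>k \<omega>. (\<Sum>m\<in>C. x m k \<omega>) / real (card C));
         DeltaH = (\<lambda>\<omega>. (\<Sum>k<d. (x i k \<omega> - muhat k \<omega>)\<^sup>2) / (1 + 1 / real (card C)));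
         R = real (card (C \<inter> {m. m < n \<and> z m = z i})) / real (card C);
         \<eta> = 2 * \<tau>\<^sup>2 * (real (card C) / (real (card C) + 1)) * (1 - R)\<^sup>2 + \<sigma>\<^sup>2
     in distributed M lborel (\<lambda>\<omega>. DeltaH \<omega> / \<eta>) (chi_squared_density d)"
proof -
  interpret prob_space M by fact
  define l' where "l' = 3 - z i"
  have l': "l' \<in> {1, 2}" "l' \<noteq> z i" "{1, 2} = {z i, l'}"
    using labels[OF i(1)] by (auto simp: l'_def)
  define c where "c = real (card C)"
  define R where "R = real (card {m \<in> C. z m = z i}) / c"
  define \<eta> where "\<eta> = 2 * \<tau>\<^sup>2 * (c / (c + 1)) * (1 - R)\<^sup>2 + \<sigma>\<^sup>2"
  have C: "C \<subseteq> {..<n}" "finite C" "z ` C \<subseteq> {z i, l'}" and c: "0 < c"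
    using part(1,3) labels finite_subset[of C "{..<n}"]
    by (auto simp: c_def card_gt_0_iff simp flip: l'(3))
  have chi: "distributed M lborel
      (\<lambda>\<omega>. \<Sum>k\<in>{..<d}. (\<Sum>s\<in>coord_sources {z i, l'} (insert i C) k. residual_coeff z i C s * X s \<omega>)\<^sup>2
                         / ((1 + 1 / c) * \<eta>))
      (chi_squared_density (card {..<d}))"
  proof (rule distributed_sum_squares_block_linear_forms[OF indep,
          where sd="\<lambda>s. case s of Ctr _ _ \<Rightarrow> \<tau> | Noise _ _ \<Rightarrow> \<sigma>"])
    show "(\<Sum>s\<in>coord_sources {z i, l'} (insert i C) k.
            (residual_coeff z i C s * (case s of Ctr _ _ \<Rightarrow> \<tau> | Noise _ _ \<Rightarrow> \<sigma>))\<^sup>2) = (1 + 1 / c) * \<eta>"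
      for k
      unfolding \<eta>_def hartigan_weight_cancel[OF c] unfolding R_def c_def
      by (rule residual_coeff_variance) (use C part(3) i(2) l'(2) in auto)
    show "0 < (1 + 1 / c) * \<eta>"
      unfolding \<eta>_def hartigan_weight_cancel[OF c] using c \<open>\<sigma> > 0\<close>
      by (intro add_nonneg_pos mult_pos_pos) auto
  qed (use C i l'(1) labels[OF i(1)] \<open>d \<ge> 1\<close> \<open>\<tau> > 0\<close> \<open>\<sigma> > 0\<close> ctr noise
       in \<open>auto simp: coord_sources_def disjoint_family_on_def lessThan_empty_iff split: src.splits\<close>)
  have linear: "(\<Sum>s\<in>coord_sources {z i, l'} (insert i C) k. residual_coeff z i C s * X s \<omega>)
      = X (Ctr (z i) k) \<omega> + X (Noise i k) \<omega> - (\<Sum>m\<in>C. X (Ctr (z m) k) \<omega> + X (Noise m k) \<omega>) / c"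
    for k \<omega>
    unfolding c_def by (rule centroid_residual_eq_linear_form[symmetric]) (use C l'(2) in auto)
  have class_i: "C \<inter> {m. m < n \<and> z m = z i} = {m \<in> C. z m = z i}"
    using C(1) by auto
  show ?thesis
    unfolding Let_def class_i unfolding c_def[symmetric] unfolding R_def[symmetric] \<eta>_def[symmetric]
    using chi by (simp add: linear sum_divide_distrib)
qed

end
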